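(* Every subset of every free boolean algebra is almost $\omega^{\mathrm{op}}$-like.
   Context: Subsets of a boolean algebra are ordered by the boolean order. A poset is $\kappa^{\mathrm{op}}$-like if no element is below $\kappa$-many elements of it. A poset $Q$ is almost $\kappa^{\mathrm{op}}$-like if it has a dense subset $D$ (i.e. for every $q\in Q$ there is $d\in D$ with $d\leq q$) that is $\kappa^{\mathrm{op}}$-like. *)

theory Defs
  imports Main
begin

inductive_set ba_generated :: "'a::boolean_algebra set \<Rightarrow> 'a set" for X where
  gen_base: "x \<in> X \<Longrightarrow> x \<in> ba_generated X"
| gen_bot: "bot \<in> ba_generated X"
| gen_top: "top \<in> ba_generated X"
| gen_compl: "x \<in> ba_generated X \<Longrightarrow> - x \<in> ba_generated X"
| gen_inf: "x \<in> ba_generated X \<Longrightarrow> y \<in> ba_generated X \<Longrightarrow> inf x y \<in> ba_generated X"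
| gen_sup: "x \<in> ba_generated X \<Longrightarrow> y \<in> ba_generated X \<Longrightarrow> sup x y \<in> ba_generated X"

definition ba_meet :: "'a::boolean_algebra set \<Rightarrow> 'a" where
  "ba_meet F = Finite_Set.fold inf top F"

definition ba_independent :: "'a::boolean_algebra set \<Rightarrow> bool" where
  "ba_independent X \<longleftrightarrow>
     (\<forall>F \<epsilon>. finite F \<longrightarrow> F \<subseteq> X \<longrightarrow>
        ba_meet ((\<lambda>x. if \<epsilon> x then x else - x) ` F) \<noteq> bot)"

definition free_boolean_algebra :: "'a::boolean_algebra itself \<Rightarrow> bool" where
  "free_boolean_algebra _ \<longleftrightarrow>
     (\<exists>X::'a set. ba_independent X \<and> ba_generated X = UNIV)"

definition dense_in :: "'a::order set \<Rightarrow> 'a set \<Rightarrow> bool" where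
  "dense_in D Q \<longleftrightarrow> D \<subseteq> Q \<and> (\<forall>q\<in>Q. \<exists>d\<in>D. d \<le> q)"

definition omega_op_like :: "'a::order set \<Rightarrow> bool" where
  "omega_op_like D \<longleftrightarrow> (\<forall>p\<in>D. finite {d\<in>D. p \<le> d})"

definition almost_omega_op_like :: "'a::order set \<Rightarrow> bool" where
  "almost_omega_op_like Q \<longleftrightarrow> (\<exists>D. dense_in D Q \<and> omega_op_like D)"

end

theory Submission
  imports Defs "HOL-Library.Countable_Set_Type"
begin

unbundle lattice_syntax
unbundle cardinal_syntax

text \<open>
  Induction on the cardinality of a set Y of free generators with Q \<subseteq> ba_generated Y.
  If Y is countable, so is Q, and the elements of Q that are not above an element of Q with a
  smaller index in an enumeration form an omega-op-like dense subset.

  Otherwise Y is the union of a chain of smaller sets M a, indexed by the cardinal well-order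
  on Y, chosen so that every element of ba_generated (M a) above an element of Q is above one in
  ba_generated (M a). Rank p \<in> Q by the least a with p \<in> ba_generated (M a), keep in each rank
  the elements that are not above an element of Q of lower rank, and let D be the union of
  omega-op-like dense subsets of these layers, which exist by induction. D is dense in Q.
  Above d \<in> D there are only finitely many elements of D of the same rank, none of higher rank,
  and those of lower rank all lie above one element of Q of rank below that of d; this uses
  interpolation in free algebras over the finite support of d. Induction on the rank of d
  finishes the argument.
\<close>

section \<open>Generated subalgebras\<close>

lemma ba_generated_mono: "S \<subseteq> T \<Longrightarrow> ba_generated S \<subseteq> ba_generated T"
proof
  fix x assume "x \<in> ba_generated S" "S \<subseteq> T"
  then show "x \<in> ba_generated T"
    by (induction x rule: ba_generated.induct) (auto intro: ba_generated.intros)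
qed

lemma ba_generated_empty: "ba_generated {} = {bot, top :: 'a::boolean_algebra}"
proof
  show "ba_generated {} \<subseteq> {bot, top :: 'a}"
  proof
    fix x :: 'a assume "x \<in> ba_generated {}"
    then show "x \<in> {bot, top}" by (induction x rule: ba_generated.induct) auto
  qed
qed (auto intro: ba_generated.intros)

lemma ba_generated_finitary:
  "x \<in> ba_generated Y \<Longrightarrow> \<exists>F. finite F \<and> F \<subseteq> Y \<and> x \<in> ba_generated F"
proof (induction x rule: ba_generated.induct)
  case (gen_base x)
  then show ?case by (intro exI[of _ "{x}"]) (auto intro: ba_generated.intros)
next
  case (gen_inf x y)
  then obtain F G where "finite F" "F \<subseteq> Y" "x \<in> ba_generated F"
    "finite G" "G \<subseteq> Y" "y \<in> ba_generated G" by blast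
  then show ?case
    using ba_generated_mono[of F "F \<union> G"] ba_generated_mono[of G "F \<union> G"]
    by (intro exI[of _ "F \<union> G"]) (auto intro: ba_generated.intros)
next
  case (gen_sup x y)
  then obtain F G where "finite F" "F \<subseteq> Y" "x \<in> ba_generated F"
    "finite G" "G \<subseteq> Y" "y \<in> ba_generated G" by blast
  then show ?case
    using ba_generated_mono[of F "F \<union> G"] ba_generated_mono[of G "F \<union> G"]
    by (intro exI[of _ "F \<union> G"]) (auto intro: ba_generated.intros)
qed (auto intro: ba_generated.intros)

lemma eq_cofactors_iff:
  "x = (w \<sqinter> a) \<squnion> (- w \<sqinter> b) \<longleftrightarrow> w \<sqinter> x = w \<sqinter> a \<and> - w \<sqinter> x = - w \<sqinter> (b::'a::boolean_algebra)"
proof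
  assume "x = (w \<sqinter> a) \<squnion> (- w \<sqinter> b)"
  then show "w \<sqinter> x = w \<sqinter> a \<and> - w \<sqinter> x = - w \<sqinter> b"
    by (simp add: inf_sup_distrib1 inf_assoc[symmetric])
next
  assume "w \<sqinter> x = w \<sqinter> a \<and> - w \<sqinter> x = - w \<sqinter> b"
  moreover have "x = (w \<sqinter> x) \<squnion> (- w \<sqinter> x)"
    by (simp add: inf_sup_distrib2[symmetric])
  ultimately show "x = (w \<sqinter> a) \<squnion> (- w \<sqinter> b)" by simp
qed

lemma inf_compl_absorb: "w \<sqinter> - x = w \<sqinter> - (w \<sqinter> (x::'a::boolean_algebra))"
  by (simp add: inf_sup_distrib1)

lemma inf_distrib_self: "w \<sqinter> (x \<sqinter> y) = (w \<sqinter> x) \<sqinter> (w \<sqinter> (y::'a::boolean_algebra))"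
  by (simp add: inf_aci)

lemma ba_generated_insert_cofactors:
  "x \<in> ba_generated (insert w W) \<Longrightarrow>
    \<exists>x1\<in>ba_generated W. \<exists>x0\<in>ba_generated W. w \<sqinter> x = w \<sqinter> x1 \<and> - w \<sqinter> x = - w \<sqinter> x0"
proof (induction x rule: ba_generated.induct)
  case (gen_base x)
  show ?case
  proof (cases "x = w")
    case True
    then have "w \<sqinter> x = w \<sqinter> top \<and> - w \<sqinter> x = - w \<sqinter> bot" by simp
    then show ?thesis by (blast intro: ba_generated.intros)
  next
    case False
    then show ?thesis using gen_base by (auto intro!: bexI[of _ x] ba_generated.intros)
  qed
next
  case (gen_compl x)
  then obtain x1 x0 where "x1 \<in> ba_generated W" "x0 \<in> ba_generated W"
    "w \<sqinter> x = w \<sqinter> x1" "- w \<sqinter> x = - w \<sqinter> x0" by blast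
  then show ?case
    by (metis inf_compl_absorb ba_generated.gen_compl)
next
  case (gen_inf x y)
  then obtain x1 x0 y1 y0 where "x1 \<in> ba_generated W" "x0 \<in> ba_generated W"
    "y1 \<in> ba_generated W" "y0 \<in> ba_generated W"
    "w \<sqinter> x = w \<sqinter> x1" "- w \<sqinter> x = - w \<sqinter> x0" "w \<sqinter> y = w \<sqinter> y1" "- w \<sqinter> y = - w \<sqinter> y0"
    by blast
  then show ?case
    by (metis inf_distrib_self ba_generated.gen_inf)
next
  case (gen_sup x y)
  then obtain x1 x0 y1 y0 where "x1 \<in> ba_generated W" "x0 \<in> ba_generated W"
    "y1 \<in> ba_generated W" "y0 \<in> ba_generated W"
    "w \<sqinter> x = w \<sqinter> x1" "- w \<sqinter> x = - w \<sqinter> x0" "w \<sqinter> y = w \<sqinter> y1" "- w \<sqinter> y = - w \<sqinter> y0"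
    by blast
  then show ?case
    by (metis inf_sup_distrib1 ba_generated.gen_sup)
next
  case gen_bot
  show ?case by (blast intro: ba_generated.gen_bot)
next
  case gen_top
  show ?case by (blast intro: ba_generated.gen_top)
qed

lemma ba_generated_insertE:
  assumes "x \<in> ba_generated (insert w W)"
  obtains x1 x0 where "x1 \<in> ba_generated W" "x0 \<in> ba_generated W"
    "x = (w \<sqinter> x1) \<squnion> (- w \<sqinter> x0)"
  using ba_generated_insert_cofactors[OF assms] eq_cofactors_iff by blast

lemma finite_ba_generated: "finite W \<Longrightarrow> finite (ba_generated (W::'a::boolean_algebra set))"
proof (induction W rule: finite_induct)
  case (insert w W)
  have "ba_generated (insert w W) \<subseteq>
      (\<lambda>(x1, x0). (w \<sqinter> x1) \<squnion> (- w \<sqinter> x0)) ` (ba_generated W \<times> ba_generated W)"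
    by (auto elim!: ba_generated_insertE)
  then show ?case by (rule finite_subset) (simp add: insert.IH)
qed (simp add: ba_generated_empty)

lemma countable_ba_generated:
  assumes "countable Y" shows "countable (ba_generated (Y::'a::boolean_algebra set))"
proof (rule countable_subset)
  show "ba_generated Y \<subseteq> (\<Union>F\<in>Fpow Y. ba_generated F)"
    using ba_generated_finitary unfolding Fpow_def by blast
  show "countable (\<Union>F\<in>Fpow Y. ba_generated F)"
    using countable_Fpow[OF assms] by (auto simp: Fpow_def intro: countable_finite finite_ba_generated)
qed

lemma Inf_fin_in_ba_generated:
  "finite C \<Longrightarrow> C \<noteq> {} \<Longrightarrow> C \<subseteq> ba_generated H \<Longrightarrow> Inf_fin C \<in> ba_generated H"
  by (induction C rule: finite_ne_induct) (auto intro: ba_generated.gen_inf)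

lemma ba_generated_least_above:
  assumes "finite H"
  obtains c where "c \<in> ba_generated H" "d \<le> c" "\<And>c'. c' \<in> ba_generated H \<Longrightarrow> d \<le> c' \<Longrightarrow> c \<le> c'"
proof
  let ?C = "{c \<in> ba_generated H. d \<le> c}"
  have C: "finite ?C" "top \<in> ?C" using finite_ba_generated[OF assms] by (auto intro: ba_generated.gen_top)
  then show "Inf_fin ?C \<in> ba_generated H" by (intro Inf_fin_in_ba_generated) auto
  show "d \<le> Inf_fin ?C" using C by (intro Inf_fin.boundedI) auto
  show "Inf_fin ?C \<le> c'" if "c' \<in> ba_generated H" "d \<le> c'" for c'
    using C that by (intro Inf_fin.coboundedI) auto
qed

section \<open>Independence and interpolation\<close>

definition literal :: "('a \<Rightarrow> bool) \<Rightarrow> 'a::boolean_algebra \<Rightarrow> 'a" where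
  "literal \<epsilon> x = (if \<epsilon> x then x else - x)"

lemma ba_independentD:
  "ba_independent X \<Longrightarrow> finite G \<Longrightarrow> G \<subseteq> X \<Longrightarrow> ba_meet (literal \<epsilon> ` G) \<noteq> bot"
  unfolding ba_independent_def literal_def by blast

lemma ba_meet_insert: "finite A \<Longrightarrow> ba_meet (insert x A) = x \<sqinter> ba_meet (A::'a::boolean_algebra set)"
proof -
  interpret comp_fun_idem "inf :: 'a \<Rightarrow> 'a \<Rightarrow> 'a" by (fact comp_fun_idem_inf)
  show "finite A \<Longrightarrow> ?thesis" unfolding ba_meet_def by simp
qed

lemma ba_meet_literal_insert:
  assumes "finite G" "w \<notin> G"
  shows "ba_meet (literal (\<epsilon>(w := b)) ` insert w G) = literal (\<lambda>_. b) w \<sqinter> ba_meet (literal \<epsilon> ` G)"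
proof -
  have "literal (\<epsilon>(w := b)) ` G = literal \<epsilon> ` G" using assms(2) by (auto simp: literal_def)
  then show ?thesis using assms(1) by (simp add: ba_meet_insert literal_def)
qed

lemma independent_meet_eq_bot:
  assumes ind: "ba_independent X" and W: "finite W" "W \<subseteq> X"
    and "z \<in> ba_generated W" "finite G" "G \<subseteq> X" "G \<inter> W = {}"
    and "z \<sqinter> ba_meet (literal \<epsilon> ` G) = bot"
  shows "z = bot"
  using W assms(4-)
proof (induction W arbitrary: z G \<epsilon> rule: finite_induct)
  case empty
  then show ?case using ba_generated_empty ba_independentD[OF ind] by fastforce
next
  case (insert w W)
  obtain z1 z0 where z: "z1 \<in> ba_generated W" "z0 \<in> ba_generated W" "z = (w \<sqinter> z1) \<squnion> (- w \<sqinter> z0)"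
    using insert.prems(2) by (rule ba_generated_insertE)
  have G: "finite (insert w G)" "insert w G \<subseteq> X" "insert w G \<inter> W = {}" "w \<notin> G"
    using insert by auto
  let ?M = "ba_meet (literal \<epsilon> ` G)"
  have "zb = bot" if "literal (\<lambda>_. b) w \<sqinter> zb \<le> z" "zb \<in> ba_generated W" for b zb
  proof (rule insert.IH[OF _ that(2) G(1-3)])
    have "zb \<sqinter> (literal (\<lambda>_. b) w \<sqinter> ?M) = (literal (\<lambda>_. b) w \<sqinter> zb) \<sqinter> ?M"
      by (simp add: inf_aci)
    also have "\<dots> \<le> z \<sqinter> ?M" using that(1) by (rule inf_mono) simp
    finally show "zb \<sqinter> ba_meet (literal (\<epsilon>(w := b)) ` insert w G) = bot"
      unfolding ba_meet_literal_insert[OF insert.prems(3) G(4)] using insert.prems(6)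
      by (simp add: bot_unique)
  qed (use insert.prems(1) in simp)
  moreover have "literal (\<lambda>_. True) w \<sqinter> z1 \<le> z" "literal (\<lambda>_. False) w \<sqinter> z0 \<le> z"
    using z(3) by (simp_all add: literal_def)
  ultimately have "z1 = bot" "z0 = bot" using z(1,2) by blast+
  then show ?case using z(3) by simp
qed

lemma independent_literal_le_cancel:
  assumes ind: "ba_independent X" and W: "finite W" "W \<subseteq> X" and v: "v \<in> X" "v \<notin> W"
    and a: "a \<in> ba_generated W" and b: "b \<in> ba_generated W"
    and le: "literal (\<lambda>_. e) v \<sqinter> a \<le> b"
  shows "a \<le> b"
proof -
  have "ba_meet (literal (\<lambda>_. e) ` {v}) = literal (\<lambda>_. e) v"
    by (simp add: ba_meet_insert ba_meet_def)
  moreover have "(literal (\<lambda>_. e) v \<sqinter> a) \<sqinter> - b = bot" using le by (simp add: inf_shunt)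
  ultimately have disjoint: "(a \<sqinter> - b) \<sqinter> ba_meet (literal (\<lambda>_. e) ` {v}) = bot"
    by (simp add: inf_aci)
  have "a \<sqinter> - b \<in> ba_generated W" using a b by (auto intro: ba_generated.intros)
  then have "a \<sqinter> - b = bot"
    by (rule independent_meet_eq_bot[OF ind W _ _ _ _ disjoint]) (use v in auto)
  then show ?thesis by (simp add: inf_shunt)
qed

lemma inf_le_iff_le_sup_compl: "v \<sqinter> x \<le> y \<longleftrightarrow> x \<le> y \<squnion> - (v::'a::boolean_algebra)"
  by (subst inf_commute) (simp add: shunt1 sup_commute)

lemma cofactors_le_iff:
  "(v \<sqinter> x1) \<squnion> (- v \<sqinter> x0) \<le> y \<longleftrightarrow> x1 \<le> y \<squnion> - v \<and> x0 \<le> y \<squnion> (v::'a::boolean_algebra)"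
  using inf_le_iff_le_sup_compl[of v x1 y] inf_le_iff_le_sup_compl[of "- v" x0 y] by simp

lemma independent_interpolation_finite:
  assumes ind: "ba_independent X" and S: "finite S" "S \<subseteq> X" and T: "finite T" "T \<subseteq> X"
    and "a \<in> ba_generated S" "b \<in> ba_generated T" "a \<le> b"
  shows "\<exists>c \<in> ba_generated (S \<inter> T). a \<le> c \<and> c \<le> b"
  using S assms(6-)
proof (induction S arbitrary: a b rule: finite_induct)
  case empty
  then show ?case by auto
next
  case (insert v S)
  obtain a1 a0 where a: "a1 \<in> ba_generated S" "a0 \<in> ba_generated S" "a = (v \<sqinter> a1) \<squnion> (- v \<sqinter> a0)"
    using insert.prems(2) by (rule ba_generated_insertE)
  have S: "S \<subseteq> X" "v \<in> X" using insert.prems(1) by auto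
  have le: "a1 \<le> b \<squnion> - v" "a0 \<le> b \<squnion> v" using insert.prems(4) a(3) cofactors_le_iff by blast+
  show ?case
  proof (cases "v \<in> T")
    case True
    have "b \<squnion> - v \<in> ba_generated T" "b \<squnion> v \<in> ba_generated T"
      using insert.prems(3) True by (auto intro: ba_generated.intros)
    then obtain c1 c0 where c: "c1 \<in> ba_generated (S \<inter> T)" "a1 \<le> c1" "c1 \<le> b \<squnion> - v"
      "c0 \<in> ba_generated (S \<inter> T)" "a0 \<le> c0" "c0 \<le> b \<squnion> v"
      using insert.IH[OF S(1) a(1) _ le(1)] insert.IH[OF S(1) a(2) _ le(2)] by meson
    let ?c = "(v \<sqinter> c1) \<squnion> (- v \<sqinter> c0)"
    have "v \<in> ba_generated (insert v S \<inter> T)" using True by (auto intro: ba_generated.gen_base)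
    moreover have "c1 \<in> ba_generated (insert v S \<inter> T)" "c0 \<in> ba_generated (insert v S \<inter> T)"
      using ba_generated_mono[of "S \<inter> T" "insert v S \<inter> T"] c(1,4) by auto
    ultimately have "?c \<in> ba_generated (insert v S \<inter> T)"
      by (intro ba_generated.gen_sup ba_generated.gen_inf ba_generated.gen_compl)
    moreover have "a \<le> ?c" unfolding a(3) by (intro sup_mono inf_mono order_refl c(2,5))
    moreover have "?c \<le> b" using c(3,6) cofactors_le_iff by blast
    ultimately show ?thesis by blast
  next
    case False
    text \<open>The generator v does not occur in b, so by independence it can be cancelled.\<close>
    have W: "finite (S \<union> T)" "S \<union> T \<subseteq> X" using insert.hyps(1) S(1) T by auto
    have v: "v \<notin> S \<union> T" using insert.hyps(2) False by auto
    have b: "b \<in> ba_generated (S \<union> T)" using insert.prems(3) ba_generated_mono by blast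
    have "a1 \<in> ba_generated (S \<union> T)" "a0 \<in> ba_generated (S \<union> T)"
      using a(1,2) ba_generated_mono by blast+
    then have "a1 \<le> b" "a0 \<le> b"
      using le inf_le_iff_le_sup_compl[of v a1 b] inf_le_iff_le_sup_compl[of "- v" a0 b]
        independent_literal_le_cancel[OF ind W S(2) v _ b, of _ True]
        independent_literal_le_cancel[OF ind W S(2) v _ b, of _ False]
      by (simp_all add: literal_def)
    then obtain c1 c0 where c: "c1 \<in> ba_generated (S \<inter> T)" "a1 \<le> c1" "c1 \<le> b"
      "c0 \<in> ba_generated (S \<inter> T)" "a0 \<le> c0" "c0 \<le> b"
      using insert.IH[OF S(1) a(1) insert.prems(3)] insert.IH[OF S(1) a(2) insert.prems(3)] by meson
    have "c1 \<squnion> c0 \<in> ba_generated (insert v S \<inter> T)"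
      using c(1,4) False by (auto intro: ba_generated.intros)
    moreover have "a \<le> c1 \<squnion> c0"
      unfolding a(3) using c(2,5) by (meson inf.coboundedI2 sup_mono)
    moreover have "c1 \<squnion> c0 \<le> b" using c(3,6) by simp
    ultimately show ?thesis by blast
  qed
qed

lemma independent_interpolation:
  assumes ind: "ba_independent X" and S: "finite S" "S \<subseteq> X" and T: "T \<subseteq> X"
    and a: "a \<in> ba_generated S" and b: "b \<in> ba_generated T" and "a \<le> b"
  shows "\<exists>c \<in> ba_generated (S \<inter> T). a \<le> c \<and> c \<le> b"
proof -
  obtain F where F: "finite F" "F \<subseteq> T" "b \<in> ba_generated F"
    using ba_generated_finitary[OF b] by blast
  then obtain c where "c \<in> ba_generated (S \<inter> F)" "a \<le> c" "c \<le> b"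
    using independent_interpolation_finite[OF ind S F(1) _ a F(3) \<open>a \<le> b\<close>] T by blast
  moreover have "ba_generated (S \<inter> F) \<subseteq> ba_generated (S \<inter> T)"
    using F(2) by (intro ba_generated_mono) blast
  ultimately show ?thesis by blast
qed

section \<open>Cardinality of generated subalgebras and hulls\<close>

lemma finite_subset_UN_mono:
  assumes "mono (S :: nat \<Rightarrow> 'a set)" "finite F" "F \<subseteq> (\<Union>n. S n)"
  obtains n where "F \<subseteq> S n"
proof -
  have "S m \<subseteq> S n \<or> S n \<subseteq> S m" for m n
    using nat_le_linear[of m n] monoD[OF assms(1)] by blast
  then have "subset.chain UNIV (range S)" by (auto simp: subset.chain_def)
  then obtain T where "T \<in> range S" "F \<subseteq> T"
    using finite_subset_Union_chain[OF assms(2)] assms(3) by auto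
  then show ?thesis using that by blast
qed

lemma card_of_Un_le_infinite: "infinite Z \<Longrightarrow> |A| \<le>o |Z| \<Longrightarrow> |B| \<le>o |Z| \<Longrightarrow> |A \<union> B| \<le>o |Z|"
  by (rule card_of_Un_ordLeq_infinite_Field) (simp_all add: Field_card_of card_of_Card_order card_of_card_order_on)

lemma card_of_Times_le_infinite: "infinite Z \<Longrightarrow> |A| \<le>o |Z| \<Longrightarrow> |B| \<le>o |Z| \<Longrightarrow> |A \<times> B| \<le>o |Z|"
  by (rule card_of_Times_ordLeq_infinite_Field) (simp_all add: Field_card_of card_of_Card_order card_of_card_order_on)

lemma card_of_finite_le_infinite: "finite A \<Longrightarrow> infinite Z \<Longrightarrow> |A| \<le>o |Z|"
  by (rule ordLess_imp_ordLeq, rule finite_ordLess_infinite) (simp_all add: Field_card_of card_of_well_order_on)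

lemma card_of_UN_funpow_le:
  fixes f :: "'a set \<Rightarrow> 'a set"
  assumes Z: "infinite Z" and W: "|W| \<le>o |Z|" and f: "\<And>V. |V| \<le>o |Z| \<Longrightarrow> |f V| \<le>o |Z|"
  shows "|\<Union>n. (f ^^ n) W| \<le>o |Z|"
proof (rule card_of_UNION_ordLeq_infinite[OF Z])
  show "|UNIV :: nat set| \<le>o |Z|" using Z by (simp add: infinite_iff_card_of_nat)
  show "\<forall>n\<in>UNIV. |(f ^^ n) W| \<le>o |Z|"
  proof
    fix n show "|(f ^^ n) W| \<le>o |Z|"
    proof (induction n)
      case 0 show ?case using W by simp
    next
      case (Suc n) then show ?case using f[OF Suc.IH] by simp
    qed
  qed
qed

definition ba_step :: "'a::boolean_algebra set \<Rightarrow> 'a set" where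
  "ba_step W = W \<union> uminus ` W \<union> case_prod inf ` (W \<times> W) \<union> case_prod sup ` (W \<times> W)"

lemma compl_in_ba_step: "x \<in> W \<Longrightarrow> - x \<in> ba_step W"
  unfolding ba_step_def by blast

lemma inf_sup_in_ba_step: "x \<in> W \<Longrightarrow> y \<in> W \<Longrightarrow> x \<sqinter> y \<in> ba_step W \<and> x \<squnion> y \<in> ba_step W"
  unfolding ba_step_def by (auto intro: rev_image_eqI[of "(x, y)"])

lemma mono_ba_step: "mono ba_step"
  by (rule monoI) (auto simp: ba_step_def)

lemma subset_ba_step: "W \<subseteq> ba_step W"
  by (auto simp: ba_step_def)

lemma ba_generated_subset_UN_ba_step:
  "ba_generated W \<subseteq> (\<Union>n. (ba_step ^^ n) (W \<union> {bot, top}))"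
proof
  define S where "S n = (ba_step ^^ n) (W \<union> {bot, top})" for n
  have "mono S"
    unfolding S_def by (rule monoI, rule funpow_mono2[OF mono_ba_step _ order_refl subset_ba_step])
  have binop: "\<exists>n. x \<sqinter> y \<in> S n \<and> x \<squnion> y \<in> S n" if xy: "x \<in> (\<Union>n. S n)" "y \<in> (\<Union>n. S n)" for x y
  proof -
    obtain n where "{x, y} \<subseteq> S n"
      by (rule finite_subset_UN_mono[OF \<open>mono S\<close>, where F = "{x, y}"]) (use xy in auto)
    then have "x \<sqinter> y \<in> ba_step (S n) \<and> x \<squnion> y \<in> ba_step (S n)"
      by (simp add: inf_sup_in_ba_step)
    then have "x \<sqinter> y \<in> S (Suc n) \<and> x \<squnion> y \<in> S (Suc n)" by (simp add: S_def)
    then show ?thesis by blast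
  qed
  have start: "W \<union> {bot, top} \<subseteq> S 0" by (simp add: S_def)
  fix x assume "x \<in> ba_generated W"
  then have "x \<in> (\<Union>n. S n)"
  proof (induction x rule: ba_generated.induct)
    case (gen_compl x)
    then obtain n where "x \<in> S n" by blast
    then have "- x \<in> ba_step (S n)" by (rule compl_in_ba_step)
    then have "- x \<in> S (Suc n)" by (simp add: S_def)
    then show ?case by blast
  next
    case (gen_inf x y)
    then show ?case using binop by blast
  next
    case (gen_sup x y)
    then show ?case using binop by blast
  qed (use start in blast)+
  then show "x \<in> (\<Union>n. (ba_step ^^ n) (W \<union> {bot, top}))" by (simp add: S_def)
qed

lemma card_of_ba_generated_le:
  assumes Z: "infinite Z" and W: "|W| \<le>o |Z|"
  shows "|ba_generated (W::'a::boolean_algebra set)| \<le>o |Z|"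
proof -
  have step: "|ba_step V| \<le>o |Z|" if V: "|V| \<le>o |Z|" for V :: "'a set"
  proof -
    have VV: "|V \<times> V| \<le>o |Z|" by (rule card_of_Times_le_infinite[OF Z V V])
    have "|uminus ` V| \<le>o |Z|" using ordLeq_transitive[OF card_of_image V] .
    moreover have "|case_prod inf ` (V \<times> V)| \<le>o |Z|" using ordLeq_transitive[OF card_of_image VV] .
    moreover have "|case_prod sup ` (V \<times> V)| \<le>o |Z|" using ordLeq_transitive[OF card_of_image VV] .
    ultimately show ?thesis
      unfolding ba_step_def using V by (metis card_of_Un_le_infinite[OF Z])
  qed
  have "|{bot, top :: 'a}| \<le>o |Z|" by (rule card_of_finite_le_infinite[OF _ Z]) simp
  then have "|W \<union> {bot, top}| \<le>o |Z|" by (rule card_of_Un_le_infinite[OF Z W])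
  then have "|\<Union>n. (ba_step ^^ n) (W \<union> {bot, top})| \<le>o |Z|"
    by (rule card_of_UN_funpow_le[OF Z _ step])
  with card_of_mono1[OF ba_generated_subset_UN_ba_step] show ?thesis
    by (rule ordLeq_transitive)
qed

definition ba_hull_step :: "('a::boolean_algebra \<Rightarrow> 'a set) \<Rightarrow> 'a set \<Rightarrow> 'a set" where
  "ba_hull_step g Z = Z \<union> (\<Union>c\<in>ba_generated Z. g c)"

definition ba_hull :: "('a::boolean_algebra \<Rightarrow> 'a set) \<Rightarrow> 'a set \<Rightarrow> 'a set" where
  "ba_hull g Z = (\<Union>n. (ba_hull_step g ^^ n) Z)"

lemma mono_ba_hull_step: "mono (ba_hull_step g)"
proof (rule monoI)
  fix Z Z' :: "'a set" assume "Z \<le> Z'"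
  then show "ba_hull_step g Z \<le> ba_hull_step g Z'"
    using ba_generated_mono[of Z Z'] unfolding ba_hull_step_def by blast
qed

lemma subset_ba_hull_step: "Z \<subseteq> ba_hull_step g Z"
  by (simp add: ba_hull_step_def)

lemma subset_ba_hull: "Z \<subseteq> ba_hull g Z"
  unfolding ba_hull_def using UN_upper[of 0 UNIV "\<lambda>n. (ba_hull_step g ^^ n) Z"] by simp

lemma ba_hull_mono: "Z \<subseteq> Z' \<Longrightarrow> ba_hull g Z \<subseteq> ba_hull g Z'"
  unfolding ba_hull_def by (intro UN_mono order_refl funpow_mono mono_ba_hull_step)

lemma ba_hull_closed:
  assumes "c \<in> ba_generated (ba_hull g Z)"
  shows "g c \<subseteq> ba_hull g Z"
proof -
  define S where "S n = (ba_hull_step g ^^ n) Z" for n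
  have "mono S"
    unfolding S_def by (rule monoI, rule funpow_mono2[OF mono_ba_hull_step _ order_refl subset_ba_hull_step])
  obtain F where F: "finite F" "F \<subseteq> ba_hull g Z" "c \<in> ba_generated F"
    using ba_generated_finitary[OF assms] by blast
  obtain n where "F \<subseteq> S n"
    by (rule finite_subset_UN_mono[OF \<open>mono S\<close> F(1)]) (use F(2) in \<open>simp add: ba_hull_def S_def\<close>)
  then have "c \<in> ba_generated (S n)" using ba_generated_mono F(3) by blast
  then have "g c \<subseteq> S (Suc n)" by (auto simp: S_def ba_hull_step_def)
  then show ?thesis unfolding ba_hull_def S_def by blast
qed

lemma ba_hull_subset:
  assumes "Z \<subseteq> Y" "\<And>c. g c \<subseteq> Y"
  shows "ba_hull g Z \<subseteq> Y"
proof -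
  have "(ba_hull_step g ^^ n) Z \<subseteq> Y" for n
    by (induction n) (use assms in \<open>auto simp: ba_hull_step_def\<close>)
  then show ?thesis unfolding ba_hull_def by blast
qed

lemma card_of_ba_hull_le:
  fixes g :: "'a::boolean_algebra \<Rightarrow> 'a set"
  assumes Z: "infinite Z" and g: "\<And>c. finite (g c)"
  shows "|ba_hull g Z| \<le>o |Z|"
  unfolding ba_hull_def
proof (rule card_of_UN_funpow_le[OF Z])
  show "|Z| \<le>o |Z|" by (rule ordLeq_refl) (rule card_of_Card_order)
  fix V :: "'a set" assume V: "|V| \<le>o |Z|"
  have "|\<Union>c\<in>ba_generated V. g c| \<le>o |Z|"
    by (rule card_of_UNION_ordLeq_infinite[OF Z card_of_ba_generated_le[OF Z V]])
       (simp add: card_of_finite_le_infinite[OF g Z])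
  then show "|ba_hull_step g V| \<le>o |Z|"
    unfolding ba_hull_step_def by (rule card_of_Un_le_infinite[OF Z V])
qed

lemma countable_almost_omega_op_like:
  assumes "countable (Q :: 'a::order set)"
  shows "almost_omega_op_like Q"
proof -
  let ?i = "to_nat_on Q"
  define D where "D = {p \<in> Q. \<not> (\<exists>q\<in>Q. q < p \<and> ?i q < ?i p)}"
  have "dense_in D Q"
    unfolding dense_in_def
  proof (intro conjI ballI)
    show "D \<subseteq> Q" unfolding D_def by auto
    fix p assume "p \<in> Q"
    define n where "n = (LEAST n. \<exists>q\<in>Q. q \<le> p \<and> ?i q = n)"
    obtain q where q: "q \<in> Q" "q \<le> p" "?i q = n"
      using LeastI_ex[of "\<lambda>n. \<exists>q\<in>Q. q \<le> p \<and> ?i q = n"] \<open>p \<in> Q\<close> unfolding n_def by blast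
    have "n \<le> ?i q'" if "q' \<in> Q" "q' < q" for q'
      unfolding n_def using that q(2) by (intro Least_le) (blast intro: order.strict_implies_order order_trans)
    then have "q \<in> D" unfolding D_def using q by force
    then show "\<exists>d\<in>D. d \<le> p" using q(2) by blast
  qed
  moreover have "omega_op_like D"
    unfolding omega_op_like_def
  proof
    fix p assume p: "p \<in> D"
    have "{d \<in> D. p \<le> d} \<subseteq> {x \<in> Q. ?i x \<le> ?i p}"
      using p unfolding D_def by (auto simp: order.order_iff_strict not_less)
    moreover have "finite {x \<in> Q. ?i x \<le> ?i p}"
      using inj_on_to_nat_on[OF assms]
      by (intro inj_on_finite[of ?i _ "{..?i p}"]) (auto intro: inj_on_subset)
    ultimately show "finite {d \<in> D. p \<le> d}" by (rule finite_subset)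
  qed
  ultimately show ?thesis unfolding almost_omega_op_like_def by blast
qed

section \<open>Filtrations along a well-order\<close>

lemma wo_rel_subset_chain:
  assumes "wo_rel r" "\<And>a b. (a, b) \<in> r \<Longrightarrow> A a \<subseteq> A b" "B \<subseteq> Field r"
  shows "subset.chain UNIV (A ` B)"
  using assms wo_rel.TOTALS[OF assms(1)] unfolding subset.chain_def by blast

locale ba_filtration =
  fixes X :: "'a::boolean_algebra set" and Q :: "'a set" and r :: "'i rel" and M :: "'i \<Rightarrow> 'a set"
  assumes independent: "ba_independent X"
    and Q_generated: "Q \<subseteq> ba_generated X"
    and wo: "wo_rel r"
    and M_subset: "\<And>a. a \<in> Field r \<Longrightarrow> M a \<subseteq> X"
    and M_mono: "\<And>a b. (a, b) \<in> r \<Longrightarrow> M a \<subseteq> M b"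
    and M_reflects: "\<And>a c q. a \<in> Field r \<Longrightarrow> c \<in> ba_generated (M a) \<Longrightarrow> q \<in> Q \<Longrightarrow> q \<le> c \<Longrightarrow>
      \<exists>q'\<in>Q \<inter> ba_generated (M a). q' \<le> c"
    and Q_covered: "\<And>p. p \<in> Q \<Longrightarrow> \<exists>a\<in>Field r. p \<in> ba_generated (M a)"
    and almost_omega_op_like_stage:
      "\<And>a Q'. a \<in> Field r \<Longrightarrow> Q' \<subseteq> Q \<inter> ba_generated (M a) \<Longrightarrow> almost_omega_op_like Q'"
begin

definition rank :: "'a \<Rightarrow> 'i" where
  "rank p = wo_rel.minim r {a \<in> Field r. p \<in> ba_generated (M a)}"

lemma rank_spec: "p \<in> Q \<Longrightarrow> rank p \<in> Field r \<and> p \<in> ba_generated (M (rank p))"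
  using wo_rel.minim_in[OF wo, of "{a \<in> Field r. p \<in> ba_generated (M a)}"] Q_covered
  unfolding rank_def by blast

lemma rank_least: "a \<in> Field r \<Longrightarrow> p \<in> ba_generated (M a) \<Longrightarrow> (rank p, a) \<in> r"
  unfolding rank_def by (rule wo_rel.minim_least[OF wo]) auto

lemma r_trans: "(a, b) \<in> r \<Longrightarrow> (b, c) \<in> r \<Longrightarrow> (a, c) \<in> r"
  using wo_rel.TRANS[OF wo] unfolding trans_def by blast

lemma r_underS_trans: "(a, b) \<in> r \<Longrightarrow> b \<in> underS r c \<Longrightarrow> a \<in> underS r c"
  using wo_rel.ANTISYM[OF wo] r_trans unfolding underS_def antisym_def by blast

definition layer :: "'i \<Rightarrow> 'a set" where
  "layer a = {p \<in> Q. rank p = a \<and> (\<forall>q\<in>Q. q \<le> p \<longrightarrow> rank q \<notin> underS r a)}"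

definition layer_base :: "'i \<Rightarrow> 'a set" where
  "layer_base a = (SOME D. dense_in D (layer a) \<and> omega_op_like D)"

definition base :: "'a set" where
  "base = (\<Union>a\<in>Field r. layer_base a)"

lemma layer_base_spec: "a \<in> Field r \<Longrightarrow> dense_in (layer_base a) (layer a) \<and> omega_op_like (layer_base a)"
proof -
  assume a: "a \<in> Field r"
  have "layer a \<subseteq> Q \<inter> ba_generated (M a)" unfolding layer_def using rank_spec by auto
  then have "\<exists>D. dense_in D (layer a) \<and> omega_op_like D"
    using almost_omega_op_like_stage[OF a] unfolding almost_omega_op_like_def by blast
  then show ?thesis unfolding layer_base_def by (rule someI_ex)
qed

lemma base_in_layer: "d \<in> base \<Longrightarrow> d \<in> layer (rank d) \<and> d \<in> layer_base (rank d)"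
proof -
  assume "d \<in> base"
  then obtain a where a: "a \<in> Field r" "d \<in> layer_base a" unfolding base_def by blast
  then have "d \<in> layer a" using layer_base_spec[OF a(1)] unfolding dense_in_def by blast
  then have "rank d = a" unfolding layer_def by blast
  then show ?thesis using a \<open>d \<in> layer a\<close> by simp
qed

lemma base_subset: "base \<subseteq> Q"
  using base_in_layer unfolding layer_def by blast

lemma base_below:
  "p \<in> Q \<Longrightarrow> \<exists>d\<in>base. d \<le> p \<and> (rank d, rank p) \<in> r"
proof (induction "rank p" arbitrary: p rule: wo_rel.well_order_induct[OF wo])
  case 1
  show ?case
  proof (cases "\<exists>q\<in>Q. q \<le> p \<and> rank q \<in> underS r (rank p)")
    case True
    then obtain q where q: "q \<in> Q" "q \<le> p" "rank q \<in> underS r (rank p)" by blast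
    then obtain d where "d \<in> base" "d \<le> q" "(rank d, rank q) \<in> r"
      using 1(1) by (auto simp: underS_def)
    then show ?thesis using q r_trans by (auto simp: underS_def intro: order_trans)
  next
    case False
    then have "p \<in> layer (rank p)" unfolding layer_def using 1(2) by blast
    moreover have a: "rank p \<in> Field r" using rank_spec[OF 1(2)] by blast
    ultimately obtain d where d: "d \<in> layer_base (rank p)" "d \<le> p"
      using layer_base_spec[OF a] unfolding dense_in_def by blast
    then have "rank d = rank p" using layer_base_spec[OF a] unfolding dense_in_def layer_def by blast
    moreover have "d \<in> base" using a d(1) unfolding base_def by blast
    ultimately show ?thesis using a d(2) wo_rel.REFL[OF wo] unfolding refl_on_def by auto
  qed
qed

text \<open>Interpolate each d \<le> u over the finite support of d; the least element above d of the
  finite subalgebra generated by all these interpolants lies in a single stage, where it can be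
  reflected into Q.\<close>
lemma common_lower_bound:
  assumes d: "d \<in> Q" and U: "U \<subseteq> Q" "U \<noteq> {}" "\<And>u. u \<in> U \<Longrightarrow> d \<le> u"
  obtains q u0 where "q \<in> Q" "u0 \<in> U" "(rank q, rank u0) \<in> r" "\<And>u. u \<in> U \<Longrightarrow> q \<le> u"
proof -
  have "d \<in> ba_generated X" using d Q_generated by blast
  then obtain F where F: "finite F" "F \<subseteq> X" "d \<in> ba_generated F"
    using ba_generated_finitary by blast
  have interpolant: "\<exists>c \<in> ba_generated (F \<inter> M (rank u)). d \<le> c \<and> c \<le> u" if "u \<in> U" for u
  proof -
    have u: "rank u \<in> Field r" "u \<in> ba_generated (M (rank u))" using rank_spec that U(1) by blast+
    show ?thesis
      by (rule independent_interpolation[OF independent F(1,2) M_subset[OF u(1)] F(3) u(2) U(3)[OF that]])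
  qed
  define H where "H = F \<inter> (\<Union>u\<in>U. M (rank u))"
  have "finite H" using F(1) unfolding H_def by simp
  moreover have "H \<subseteq> \<Union> (M ` rank ` U)" unfolding H_def by blast
  moreover have "M ` rank ` U \<noteq> {}" using U(2) by blast
  moreover have "rank ` U \<subseteq> Field r" using rank_spec U(1) by blast
  then have "subset.chain UNIV (M ` rank ` U)" using wo_rel_subset_chain[of r M, OF wo M_mono] by simp
  ultimately obtain B where "B \<in> M ` rank ` U" "H \<subseteq> B" by (rule finite_subset_Union_chain)
  then obtain u0 where u0: "u0 \<in> U" "H \<subseteq> M (rank u0)" by blast
  obtain c0 where c0: "c0 \<in> ba_generated H" "d \<le> c0"
    "\<And>c. c \<in> ba_generated H \<Longrightarrow> d \<le> c \<Longrightarrow> c0 \<le> c"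
    using ba_generated_least_above[OF \<open>finite H\<close>] by blast
  have below_U: "c0 \<le> u" if u: "u \<in> U" for u
  proof -
    obtain c where c: "c \<in> ba_generated (F \<inter> M (rank u))" "d \<le> c" "c \<le> u"
      using interpolant[OF u] by blast
    have "F \<inter> M (rank u) \<subseteq> H" unfolding H_def using u by blast
    then have "c0 \<le> c" using c(1,2) c0(3) ba_generated_mono by blast
    then show ?thesis using c(3) by (rule order_trans)
  qed
  have u0_rank: "rank u0 \<in> Field r" using rank_spec u0(1) U(1) by blast
  have "c0 \<in> ba_generated (M (rank u0))" using c0(1) ba_generated_mono[OF u0(2)] by blast
  then obtain q where q: "q \<in> Q" "q \<in> ba_generated (M (rank u0))" "q \<le> c0"
    using M_reflects[OF u0_rank _ d c0(2)] by blast
  show thesis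
  proof (rule that[OF q(1) u0(1)])
    show "(rank q, rank u0) \<in> r" using rank_least[OF u0_rank q(2)] .
    show "q \<le> u" if "u \<in> U" for u using q(3) below_U[OF that] by (rule order_trans)
  qed
qed

lemma base_above_rank:
  assumes "d \<in> base" "d' \<in> base" "d \<le> d'"
  shows "d' \<in> layer_base (rank d) \<or> rank d' \<in> underS r (rank d)"
proof -
  have d: "d \<in> Q" "rank d \<in> Field r" using assms(1) base_subset rank_spec by blast+
  have d': "rank d' \<in> Field r" "d' \<in> layer (rank d')" "d' \<in> layer_base (rank d')"
    using base_in_layer[OF assms(2)] rank_spec base_subset assms(2) by blast+
  have "rank d \<notin> underS r (rank d')" using d(1) d'(2) assms(3) unfolding layer_def by blast
  show ?thesis
  proof (cases "rank d' = rank d")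
    case False
    then have "(rank d', rank d) \<in> r"
      using \<open>rank d \<notin> underS r (rank d')\<close> wo_rel.TOTALS[OF wo] d(2) d'(1) by (auto simp: underS_def)
    then show ?thesis using False by (simp add: underS_def)
  qed (use d'(3) in simp)
qed

lemma base_finite_above: "d \<in> base \<Longrightarrow> finite {d' \<in> base. d \<le> d'}"
proof (induction "rank d" arbitrary: d rule: wo_rel.well_order_induct[OF wo])
  case 1
  let ?a = "rank d"
  define U where "U = {d' \<in> base. d \<le> d' \<and> rank d' \<in> underS r ?a}"
  have d: "d \<in> Q" "?a \<in> Field r" "d \<in> layer_base ?a"
    using base_subset 1(2) rank_spec base_in_layer by blast+
  have "{d' \<in> base. d \<le> d'} \<subseteq> {d' \<in> layer_base ?a. d \<le> d'} \<union> U"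
  proof
    fix d' assume "d' \<in> {d' \<in> base. d \<le> d'}"
    then show "d' \<in> {d' \<in> layer_base ?a. d \<le> d'} \<union> U"
      using base_above_rank[OF 1(2), of d'] unfolding U_def by blast
  qed
  moreover have "finite {d' \<in> layer_base ?a. d \<le> d'}"
    using layer_base_spec[OF d(2)] d(3) unfolding omega_op_like_def by blast
  moreover have "finite U"
  proof (cases "U = {}")
    case False
    have "U \<subseteq> Q" unfolding U_def using base_subset by blast
    then obtain q u0 where q: "q \<in> Q" "u0 \<in> U" "(rank q, rank u0) \<in> r" "\<And>u. u \<in> U \<Longrightarrow> q \<le> u"
      using common_lower_bound[OF d(1) _ False] unfolding U_def by blast
    obtain d'' where d'': "d'' \<in> base" "d'' \<le> q" "(rank d'', rank q) \<in> r"
      using base_below[OF q(1)] by blast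
    have "rank u0 \<in> underS r ?a" using q(2) unfolding U_def by blast
    then have "rank d'' \<in> underS r ?a"
      by (rule r_underS_trans[OF r_trans[OF d''(3) q(3)]])
    then have "finite {x \<in> base. d'' \<le> x}" using 1(1) d''(1) by (auto simp: underS_def)
    moreover have "U \<subseteq> {x \<in> base. d'' \<le> x}"
      using q(4) d''(2) unfolding U_def by (blast intro: order_trans)
    ultimately show ?thesis by (rule finite_subset[rotated])
  qed simp
  ultimately show ?case using finite_subset by blast
qed

theorem almost_omega_op_like: "almost_omega_op_like Q"
proof -
  have "dense_in base Q" unfolding dense_in_def using base_subset base_below by blast
  moreover have "omega_op_like base" unfolding omega_op_like_def using base_finite_above by blast
  ultimately show ?thesis unfolding almost_omega_op_like_def by blast
qed

end

section \<open>The induction on the number of generators\<close>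

lemma finite_witness_supports:
  assumes "Q \<subseteq> ba_generated Y"
  obtains g where "\<And>c. finite (g c)" "\<And>c. g c \<subseteq> Y"
    "\<And>c q. q \<in> Q \<Longrightarrow> q \<le> c \<Longrightarrow> \<exists>q'\<in>Q \<inter> ba_generated (g c). q' \<le> c"
proof
  define wit where "wit c = (SOME q. q \<in> Q \<and> q \<le> c)" for c
  define supp where "supp q = (SOME F. finite F \<and> F \<subseteq> Y \<and> q \<in> ba_generated F)" for q
  define g where "g c = (if \<exists>q\<in>Q. q \<le> c then supp (wit c) else {})" for c
  have wit: "wit c \<in> Q \<and> wit c \<le> c" if "\<exists>q\<in>Q. q \<le> c" for c
    unfolding wit_def by (rule someI_ex) (use that in blast)
  have supp: "finite (supp q) \<and> supp q \<subseteq> Y \<and> q \<in> ba_generated (supp q)" if "q \<in> Q" for q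
    unfolding supp_def by (rule someI_ex, rule ba_generated_finitary) (use that assms in blast)
  show "finite (g c)" "g c \<subseteq> Y" for c
    using wit supp unfolding g_def by auto
  show "\<exists>q'\<in>Q \<inter> ba_generated (g c). q' \<le> c" if "q \<in> Q" "q \<le> c" for c q
    using that wit supp unfolding g_def by fastforce
qed

lemma wo_rel_card_of: "wo_rel |A|"
  by (simp add: wo_rel_def card_of_Well_order)

lemma finite_subset_under_card_of:
  assumes "finite F" "F \<subseteq> Y" "Y \<noteq> {}"
  obtains a where "a \<in> Y" "F \<subseteq> under |Y| a"
proof -
  note wo = wo_rel_card_of[of Y]
  have "F \<subseteq> \<Union> (under |Y| ` Y)"
    using assms(2) wo_rel.REFL[OF wo] by (auto simp: under_def refl_on_def Field_card_of)
  moreover have "under |Y| ` Y \<noteq> {}" using assms(3) by blast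
  moreover have "subset.chain UNIV (under |Y| ` Y)"
    using wo_rel_subset_chain[of "|Y|" "under |Y|", OF wo under_incr[OF wo_rel.TRANS[OF wo]]]
    by (simp add: Field_card_of)
  ultimately obtain B where "B \<in> under |Y| ` Y" "F \<subseteq> B"
    by (rule finite_subset_Union_chain[OF assms(1)])
  then show thesis using that by blast
qed

lemma card_of_under_Un_countable_less:
  assumes Y: "\<not> countable Y" and "countable N" "a \<in> Y"
  shows "|under |Y| a \<union> N| <o |Y|"
proof -
  have "\<not> |Y| \<le>o |UNIV :: nat set|" using Y by (simp add: countable_card_of_nat)
  then have nat_less: "|UNIV :: nat set| <o |Y|"
    using not_ordLeq_iff_ordLess[OF card_of_Well_order card_of_Well_order] by blast
  have "|insert a N| \<le>o |UNIV :: nat set|" using assms(2) by (simp add: countable_card_of_nat[symmetric])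
  then have N_less: "|insert a N| <o |Y|" using nat_less by (rule ordLeq_ordLess_trans)
  have "|underS |Y| a| <o |Y|"
    using card_of_underS[OF card_of_Card_order, of a Y] assms(3) by (simp add: Field_card_of)
  moreover have "infinite Y" using Y countable_finite by blast
  ultimately have "|underS |Y| a \<union> insert a N| <o |Y|"
    using N_less by (intro card_of_Un_ordLess_infinite)
  moreover have "under |Y| a \<union> N \<subseteq> underS |Y| a \<union> insert a N"
    using Refl_under_underS[OF wo_rel.REFL[OF wo_rel_card_of], of a Y] assms(3) by (auto simp: Field_card_of)
  ultimately show ?thesis by (metis card_of_mono1 ordLeq_ordLess_trans)
qed

text \<open>The stages are Loewenheim-Skolem hulls: closing under g makes every element of a stage
  that lies above an element of Q lie above one whose support is in the stage.\<close>
lemma uncountable_filtration: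
  fixes Q Y :: "'a::boolean_algebra set"
  assumes Y: "\<not> countable Y" and Q: "Q \<subseteq> ba_generated Y"
  obtains M where "\<And>a. M a \<subseteq> Y" "\<And>a b. (a, b) \<in> |Y| \<Longrightarrow> M a \<subseteq> M b"
    "\<And>a c q. c \<in> ba_generated (M a) \<Longrightarrow> q \<in> Q \<Longrightarrow> q \<le> c \<Longrightarrow> \<exists>q'\<in>Q \<inter> ba_generated (M a). q' \<le> c"
    "\<And>p. p \<in> Q \<Longrightarrow> \<exists>a\<in>Y. p \<in> ba_generated (M a)"
    "\<And>a. a \<in> Y \<Longrightarrow> |M a| <o |Y|"
proof -
  obtain g where g: "\<And>c. finite (g c)" "\<And>c. g c \<subseteq> Y"
    "\<And>c q. q \<in> Q \<Longrightarrow> q \<le> c \<Longrightarrow> \<exists>q'\<in>Q \<inter> ba_generated (g c). q' \<le> c"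
    using finite_witness_supports[OF Q] by blast
  have "infinite Y" using Y countable_finite by blast
  then obtain N where N: "N \<subseteq> Y" "countable N" "infinite N"
    using infinite_countable_subset' by blast
  define M where "M a = ba_hull g (under |Y| a \<union> N)" for a
  show thesis
  proof
    show "M a \<subseteq> Y" for a
      unfolding M_def using N(1) under_Field[of "|Y|" a] g(2)
      by (intro ba_hull_subset) (auto simp: Field_card_of)
    show "M a \<subseteq> M b" if "(a, b) \<in> |Y|" for a b
      unfolding M_def using under_incr[OF wo_rel.TRANS[OF wo_rel_card_of] that] by (intro ba_hull_mono) blast
    show "\<exists>q'\<in>Q \<inter> ba_generated (M a). q' \<le> c"
      if "c \<in> ba_generated (M a)" "q \<in> Q" "q \<le> c" for a c q
      using g(3)[OF that(2,3)] ba_generated_mono[OF ba_hull_closed[OF that(1)[unfolded M_def]]]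
      unfolding M_def by blast
    show "\<exists>a\<in>Y. p \<in> ba_generated (M a)" if "p \<in> Q" for p
    proof -
      have "p \<in> ba_generated Y" using that Q by blast
      then obtain F where F: "finite F" "F \<subseteq> Y" "p \<in> ba_generated F"
        using ba_generated_finitary by blast
      have "Y \<noteq> {}" using \<open>infinite Y\<close> by auto
      then obtain a where "a \<in> Y" "F \<subseteq> under |Y| a"
        using finite_subset_under_card_of[OF F(1,2)] by blast
      moreover have "under |Y| a \<subseteq> M a" unfolding M_def using subset_ba_hull by fast
      ultimately show ?thesis using ba_generated_mono[of F "M a"] F(3) by auto
    qed
    show "|M a| <o |Y|" if "a \<in> Y" for a
    proof -
      have "|M a| \<le>o |under |Y| a \<union> N|"
        unfolding M_def using N(3) by (intro card_of_ba_hull_le g(1)) simp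
      then show ?thesis
        using card_of_under_Un_countable_less[OF Y N(2) that] by (rule ordLeq_ordLess_trans)
    qed
  qed
qed

lemma almost_omega_op_like_generated:
  assumes ind: "ba_independent X"
  shows "Y \<subseteq> X \<Longrightarrow> Q \<subseteq> ba_generated Y \<Longrightarrow> almost_omega_op_like (Q :: 'a::boolean_algebra set)"
proof (induction Y arbitrary: Q rule: wf_induct_rule[OF wf_inv_image[OF wf_ordLess, of card_of]])
  case (1 Y)
  show ?case
  proof (cases "countable Y")
    case True
    then have "countable Q" using countable_ba_generated 1(3) countable_subset by blast
    then show ?thesis by (rule countable_almost_omega_op_like)
  next
    case False
    obtain M where M: "\<And>a. M a \<subseteq> Y" "\<And>a b. (a, b) \<in> |Y| \<Longrightarrow> M a \<subseteq> M b"
      "\<And>a c q. c \<in> ba_generated (M a) \<Longrightarrow> q \<in> Q \<Longrightarrow> q \<le> c \<Longrightarrow> \<exists>q'\<in>Q \<inter> ba_generated (M a). q' \<le> c"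
      "\<And>p. p \<in> Q \<Longrightarrow> \<exists>a\<in>Y. p \<in> ba_generated (M a)"
      "\<And>a. a \<in> Y \<Longrightarrow> |M a| <o |Y|"
      using uncountable_filtration[OF False 1(3)] by blast
    interpret ba_filtration X Q "|Y|" M
    proof unfold_locales
      show "Q \<subseteq> ba_generated X" using 1(2,3) ba_generated_mono by blast
      show "M a \<subseteq> X" for a using M(1)[of a] 1(2) by (rule order_trans)
      show "almost_omega_op_like Q'" if "a \<in> Field |Y|" "Q' \<subseteq> Q \<inter> ba_generated (M a)" for a Q'
        using 1(1)[of "M a" Q'] M(1,5) 1(2) that by (auto simp: Field_card_of)
    qed (use ind M 1(2) in \<open>auto simp: Field_card_of card_of_well_order_on\<close>)
    show ?thesis by (rule almost_omega_op_like)
  qed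
qed

theorem theorem3p2:
  fixes Q :: "'a::boolean_algebra set"
  assumes "free_boolean_algebra TYPE('a)"
  shows "almost_omega_op_like Q"
proof -
  obtain X :: "'a set" where "ba_independent X" "ba_generated X = UNIV"
    using assms unfolding free_boolean_algebra_def by blast
  then show ?thesis using almost_omega_op_like_generated[of X X Q] by simp
qed

end
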